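(* Let $k\ge 2$ and $\alpha_i=\frac{1}{k-1}$ for all $1\le i\le k$. For an integer $g\ge0$ let $\ell$ be the least nonnegative residue of $g$ modulo $k-1$. Then the number $f(g)$ of $\alpha$-communal $k$-tuples with entries summing to $g$ is \[ f(g)=\binom{\frac{g-\ell k}{k-1}+k-1}{k-1}, \] and \[ \sum_{g\ge 0}f(g)x^g=\frac{1-x^{k(k-1)}}{(1-x^k)(1-x^{k-1})^k}. \]
   Context: A $k$-tuple $[g_1,\dots,g_k]$ of integers is $\alpha$-communal if $0\le g_i\le \alpha_i\sum_{j=1}^k g_j$ for every $i$. Binomial coefficients $\binom{n}{r}$ are $0$ for $0\le n<r$. *)

theory Defs
  imports Complex_Main "HOL-Computational_Algebra.Formal_Power_Series"
begin

definition communal :: "(nat \<Rightarrow> real) \<Rightarrow> int list \<Rightarrow> bool" where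
  "communal \<alpha> gs \<longleftrightarrow>
     (\<forall>i<length gs. 0 \<le> gs ! i \<and> real_of_int (gs ! i) \<le> \<alpha> i * real_of_int (sum_list gs))"

definition communal_count :: "nat \<Rightarrow> (nat \<Rightarrow> real) \<Rightarrow> int \<Rightarrow> nat" where
  "communal_count k \<alpha> g =
     card {gs :: int list. length gs = k \<and> sum_list gs = g \<and> communal \<alpha> gs}"

end

theory Submission
  imports Defs
begin

text \<open>
  Put \<open>m = k - 1\<close>, so every weight is \<open>1/m\<close>, and write \<open>g = q m + l\<close> with
  \<open>0 \<le> l < m\<close>. A tuple summing to \<open>g\<close> is communal iff all its entries lie in \<open>[0, q]\<close>.
  Subtracting each entry from \<open>q\<close> turns such tuples into \<open>k\<close>-tuples of naturals with sum
  \<open>k q - g = q - l\<close>, and the upper bound \<open>q\<close> becomes automatic because no entry can exceed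
  that sum; stars and bars then gives \<open>f(g) = C(q - l + m, m)\<close> (and \<open>f(g) = 0\<close> if \<open>l > q\<close>).

  For the generating function write \<open>g = a m + l k\<close> with \<open>a = q - l\<close>: the series equals
  \<open>(\<Sum>l<m. x^(l k)) \<cdot> \<Sum>a. C(a + m, m) x^(a m)\<close>. The first factor is the geometric sum
  \<open>(1 - x^(k m)) / (1 - x^k)\<close>; the second is \<open>1 / (1 - x^m)^k\<close>, proved via the operator
  \<open>dilate\<close> (substituting \<open>x^m\<close> for \<open>x\<close>), which turns multiplication by \<open>1 - x^m\<close> into a
  first difference, so Pascal's rule peels off one factor at a time.
\<close>

lemma communal_uniform_iff:
  assumes "m > 0"
  shows "communal (\<lambda>_. 1 / real m) gs \<longleftrightarrow> (\<forall>x\<in>set gs. 0 \<le> x \<and> x \<le> sum_list gs div int m)"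
proof -
  have "real_of_int x \<le> 1 / real m * real_of_int s \<longleftrightarrow> x \<le> s div int m" for x s :: int
  proof -
    have "real_of_int x \<le> 1 / real m * real_of_int s \<longleftrightarrow> x \<le> \<lfloor>real_of_int s / real_of_int (int m)\<rfloor>"
      by (simp add: le_floor_iff)
    also have "\<lfloor>real_of_int s / real_of_int (int m)\<rfloor> = s div int m"
      by (rule floor_divide_of_int_eq)
    finally show ?thesis .
  qed
  then show ?thesis
    unfolding communal_def by (auto simp: all_set_conv_all_nth)
qed

definition bounded_tuples :: "nat \<Rightarrow> int \<Rightarrow> int \<Rightarrow> int list set" where
  "bounded_tuples k q s = {gs::int list. length gs = k \<and> sum_list gs = s \<and> (\<forall>x\<in>set gs. 0 \<le> x \<and> x \<le> q)}"

lemma sum_list_complement: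
  fixes q :: int
  shows "sum_list (map (\<lambda>h. q - int h) hs) = int (length hs) * q - int (sum_list hs)"
  by (induction hs) (auto simp: algebra_simps)

text \<open>
  Complementation \<open>g \<mapsto> q - g\<close> maps bounded tuples bijectively onto natural tuples with sum
  \<open>N = k q - s\<close>, provided \<open>N \<le> q\<close> (which makes the bound \<open>q - g \<le> q\<close> automatic);
  stars and bars counts the latter.
\<close>

lemma card_bounded_tuples:
  fixes q s :: int
  assumes "0 \<le> int k * q - s" "int k * q - s \<le> q"
  shows "card (bounded_tuples k q s) = (nat (int k * q - s) + k - 1) choose nat (int k * q - s)"
proof -
  define N where "N = nat (int k * q - s)"
  define c where "c = map (\<lambda>h. q - int h)"
  let ?S = "bounded_tuples k q s"
  let ?T = "{hs::nat list. length hs = k \<and> sum_list hs = N}"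
  have "?S \<subseteq> c ` ?T"
  proof
    fix gs assume "gs \<in> ?S"
    then have gs: "length gs = k" "sum_list gs = s" "\<forall>x\<in>set gs. 0 \<le> x \<and> x \<le> q"
      by (simp_all add: bounded_tuples_def)
    define hs where "hs = map (\<lambda>x. nat (q - x)) gs"
    have "c hs = gs"
      using gs unfolding c_def hs_def by (auto intro!: map_idI)
    moreover have "int (sum_list hs) = int N"
      using sum_list_complement[of q hs] gs assms \<open>c hs = gs\<close>
      by (simp add: c_def hs_def N_def)
    ultimately show "gs \<in> c ` ?T"
      using gs by (intro image_eqI[of _ _ hs]) (auto simp: hs_def)
  qed
  moreover have "c ` ?T \<subseteq> ?S"
  proof (rule image_subsetI)
    fix hs assume "hs \<in> ?T"
    then have hs: "length hs = k" "sum_list hs = N" by auto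
    have "int N \<le> q"
      using assms by (simp add: N_def)
    then have "int h \<le> q" if "h \<in> set hs" for h
      using member_le_sum_list[OF that] hs by linarith
    then have "\<forall>x\<in>set (c hs). 0 \<le> x \<and> x \<le> q"
      by (auto simp: c_def)
    moreover have "sum_list (c hs) = s"
      using hs assms sum_list_complement[of q hs] by (simp add: c_def N_def)
    ultimately show "c hs \<in> ?S"
      using hs by (simp add: c_def bounded_tuples_def)
  qed
  moreover have "inj_on c ?T"
    unfolding c_def by (rule inj_on_subset[of _ UNIV]) (auto simp: inj_def)
  ultimately have "card ?S = card ?T"
    using card_image[of c ?T] by (simp add: subset_antisym)
  also have "\<dots> = (N + k - 1) choose N"
    by (rule card_length_sum_list)
  finally show ?thesis by (simp add: N_def)
qed

lemma bounded_tuples_empty: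
  fixes q s :: int
  assumes "int k * q < s"
  shows "bounded_tuples k q s = {}"
proof -
  have sum_bound: "sum_list gs \<le> int (length gs) * q" if "\<forall>x\<in>set gs. x \<le> q" for gs :: "int list"
    using that by (induction gs) (auto simp: algebra_simps)
  have False if "length gs = k" "sum_list gs = s" "\<forall>x\<in>set gs. 0 \<le> x \<and> x \<le> q" for gs
    using sum_bound[of gs] that assms by simp
  then show ?thesis
    unfolding bounded_tuples_def by blast
qed

text \<open>The count for \<open>k = m + 1\<close> and \<open>n = q m + l\<close>: here \<open>k q - n = q - l\<close>.\<close>

lemma communal_count_uniform:
  assumes "m > 0"
  shows "communal_count (Suc m) (\<lambda>_. 1 / real m) (int n) =
           (if n mod m \<le> n div m then (n div m - n mod m + m) choose m else 0)"
proof -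
  define q where "q = n div m"
  define l where "l = n mod m"
  have n: "n = q * m + l" by (simp add: q_def l_def)
  let ?S = "bounded_tuples (Suc m) (int q) (int n)"
  have count: "communal_count (Suc m) (\<lambda>_. 1 / real m) (int n) = card ?S"
    unfolding communal_count_def communal_uniform_iff[OF assms] bounded_tuples_def
    by (metis (no_types, lifting) q_def zdiv_int)
  have excess: "int (Suc m) * int q - int n = int q - int l"
    using n by (simp add: algebra_simps)
  show ?thesis
  proof (cases "l \<le> q")
    case True
    have "nat (int q - int l) = q - l"
      by (metis True nat_int of_nat_diff)
    then have "card ?S = (q - l + m) choose (q - l)"
      using card_bounded_tuples[of "Suc m" "int q" "int n"] excess True by simp
    also have "\<dots> = (q - l + m) choose m"
      using binomial_symmetric[of m "q - l + m"] by simp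
    finally show ?thesis
      using True count by (simp add: q_def l_def)
  next
    case False
    then have "int (Suc m) * int q < int n"
      using excess by linarith
    then have "?S = {}"
      by (rule bounded_tuples_empty)
    then have "card ?S = 0"
      by (simp only: card.empty)
    then show ?thesis
      using False count by (simp add: q_def l_def)
  qed
qed

text \<open>The same count in the form of the paper: \<open>(g - l k)/(k - 1) = q - l\<close>, and the truncation
  \<open>nat\<close> makes the binomial vanish exactly when \<open>l > q\<close>.\<close>

lemma communal_count_closed_form:
  fixes k g :: nat
  assumes "k \<ge> 2"
  shows "communal_count k (\<lambda>_. 1 / real (k - 1)) (int g) =
           nat ((int g - int (g mod (k - 1)) * int k) div int (k - 1) + int k - 1) choose (k - 1)"
proof -
  define m where "m = k - 1"
  have m: "m > 0" "k = Suc m"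
    using assms by (auto simp: m_def)
  define q where "q = g div m"
  define l where "l = g mod m"
  have "int g - int l * int k = (int q - int l) * int m"
    using m by (simp add: q_def l_def algebra_simps flip: of_nat_mult of_nat_add)
  then have top: "nat ((int g - int l * int k) div int m + int k - 1) = nat (int q - int l + int m)"
    using m by simp
  have "communal_count k (\<lambda>_. 1 / real m) (int g) = (if l \<le> q then (q - l + m) choose m else 0)"
    using communal_count_uniform[OF m(1), of g] m by (simp add: q_def l_def)
  also have "\<dots> = nat (int q - int l + int m) choose m"
  proof (cases "l \<le> q")
    case True
    then have "nat (int q - int l + int m) = q - l + m" by arith
    with True show ?thesis by simp
  next
    case False
    then show ?thesis
      using m(1) by (simp add: binomial_eq_0)
  qed
  finally have "communal_count k (\<lambda>_. 1 / real m) (int g) = nat (int q - int l + int m) choose m" .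
  moreover have "k - 1 = m" by (simp add: m_def)
  ultimately show ?thesis
    using top by (simp only: l_def)
qed

text \<open>\<open>dilate m c = \<Sum>a. c a x^(a m)\<close>, i.e. the series of \<open>c\<close> with \<open>x^m\<close> substituted for \<open>x\<close>.\<close>

definition dilate :: "nat \<Rightarrow> (nat \<Rightarrow> 'a::zero) \<Rightarrow> 'a fps" where
  "dilate m c = Abs_fps (\<lambda>n. if m dvd n then c (n div m) else 0)"

lemma dilate_times_one_minus:
  fixes c :: "nat \<Rightarrow> 'a::comm_ring_1"
  assumes "m > 0"
  shows "dilate m c * (1 - fps_X ^ m) = dilate m (\<lambda>a. c a - (if a = 0 then 0 else c (a - 1)))"
proof (rule fps_ext)
  fix n
  have coeff: "fps_nth (dilate m c * (1 - fps_X ^ m)) n =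
                 fps_nth (dilate m c) n - (if n < m then 0 else fps_nth (dilate m c) (n - m))"
    by (simp add: algebra_simps fps_X_power_mult_nth mult.commute[of "dilate m c"])
  show "fps_nth (dilate m c * (1 - fps_X ^ m)) n =
          fps_nth (dilate m (\<lambda>a. c a - (if a = 0 then 0 else c (a - 1)))) n"
  proof (cases "m dvd n")
    case True
    then obtain a where a: "n = m * a" ..
    show ?thesis
    proof (cases a)
      case 0
      then show ?thesis using assms a coeff by (simp add: dilate_def)
    next
      case (Suc b)
      then have "n - m = m * b" using a by simp
      then show ?thesis using assms a Suc coeff by (simp add: dilate_def)
    qed
  next
    case False
    then have "\<not> m dvd (n - m)" if "m \<le> n"
      using that by (metis dvd_add_right_iff dvd_refl le_add_diff_inverse2)
    then show ?thesis using False coeff by (auto simp: dilate_def)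
  qed
qed

lemma dilate_delta: "dilate m (\<lambda>a. if a = 0 then 1 else 0) = 1"
  by (rule fps_ext) (auto simp: dilate_def elim: dvdE)

text \<open>\<open>\<Sum>a. C(a + j, j) x^(a m) = 1 / (1 - x^m)^(j+1)\<close>: by Pascal's rule the first differences of
  \<open>C(a + j + 1, j + 1)\<close> are \<open>C(a + j, j)\<close>, and those of the constant sequence 1 are the unit sequence.\<close>

lemma dilate_binomial_inverse:
  assumes "m > 0"
  shows "dilate m (\<lambda>a. of_nat ((a + j) choose j) :: 'a::comm_ring_1) * (1 - fps_X ^ m) ^ Suc j = 1"
proof (induction j)
  case 0
  have "(\<lambda>a::nat. (1::'a) - (if a = 0 then 0 else 1)) = (\<lambda>a. if a = 0 then 1 else 0)"
    by auto
  then have "dilate m (\<lambda>a. 1 :: 'a) * (1 - fps_X ^ m) = dilate m (\<lambda>a. if a = 0 then 1 else 0)"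
    using dilate_times_one_minus[OF assms, of "\<lambda>_. 1 :: 'a"] by simp
  then show ?case by (simp add: dilate_delta)
next
  case (Suc j)
  have pascal: "(\<lambda>a. of_nat ((a + Suc j) choose Suc j) -
                   (if a = 0 then 0 else of_nat ((a - 1 + Suc j) choose Suc j)))
                = (\<lambda>a. of_nat ((a + j) choose j) :: 'a)"
  proof
    show "of_nat ((a + Suc j) choose Suc j) - (if a = 0 then 0 else of_nat ((a - 1 + Suc j) choose Suc j))
            = (of_nat ((a + j) choose j) :: 'a)" for a
      by (cases a) simp_all
  qed
  have step: "dilate m (\<lambda>a. of_nat ((a + Suc j) choose Suc j) :: 'a) * (1 - fps_X ^ m)
                = dilate m (\<lambda>a. of_nat ((a + j) choose j))"
    unfolding pascal[symmetric] by (rule dilate_times_one_minus[OF assms])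
  have "dilate m (\<lambda>a. of_nat ((a + Suc j) choose Suc j) :: 'a) * (1 - fps_X ^ m) ^ Suc (Suc j)
          = (dilate m (\<lambda>a. of_nat ((a + Suc j) choose Suc j)) * (1 - fps_X ^ m)) * (1 - fps_X ^ m) ^ Suc j"
    by (simp only: power_Suc mult_ac)
  also have "\<dots> = 1"
    unfolding step by (rule Suc.IH)
  finally show ?case .
qed

text \<open>
  Every \<open>n\<close> has at most one representation \<open>n = a m + l (m + 1)\<close> with \<open>l < m\<close>, namely
  \<open>l = n mod m\<close>, \<open>a = n div m - n mod m\<close> (if nonnegative); this extracts the coefficients of
  \<open>\<Sum>l<m. x^(l (m+1)) \<cdot> dilate m c\<close>.
\<close>

lemma shifted_dilates_sum:
  fixes c :: "nat \<Rightarrow> 'a::comm_ring_1"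
  assumes "m > 0"
  shows "(\<Sum>l<m. fps_X ^ (l * Suc m) * dilate m c) =
           Abs_fps (\<lambda>n. if n mod m \<le> n div m then c (n div m - n mod m) else 0)"
proof (rule fps_ext)
  fix n
  define q where "q = n div m"
  define r where "r = n mod m"
  have n: "n = q * m + r" by (simp add: q_def r_def)
  have r: "r < m" using assms by (simp add: r_def)
  have summand: "fps_nth (fps_X ^ (l * Suc m) * dilate m c) n = (if l = r then (if r \<le> q then c (q - r) else 0) else 0)"
    if "l < m" for l
  proof (cases "l = r \<and> r \<le> q")
    case True
    then have "n - l * Suc m = m * (q - r)" and "\<not> n < l * Suc m"
      using n by (simp_all add: algebra_simps diff_mult_distrib2)
    then show ?thesis using True assms by (simp add: fps_X_power_mult_nth dilate_def)
  next
    case False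
    have "\<not> (l * Suc m \<le> n \<and> m dvd (n - l * Suc m))"
    proof
      assume "l * Suc m \<le> n \<and> m dvd (n - l * Suc m)"
      then obtain t where "l * Suc m \<le> n" "n - l * Suc m = m * t" by (auto elim: dvdE)
      then have "n = l + m * (l + t)" by (simp add: algebra_simps)
      then have "r = l" "q = l + t"
        using \<open>l < m\<close> by (simp_all add: r_def q_def)
      then show False using False by simp
    qed
    then show ?thesis using False by (auto simp: fps_X_power_mult_nth dilate_def)
  qed
  have "fps_nth (\<Sum>l<m. fps_X ^ (l * Suc m) * dilate m c) n =
          (\<Sum>l<m. if l = r then (if r \<le> q then c (q - r) else 0) else 0)"
    unfolding fps_sum_nth by (rule sum.cong[OF refl], rule summand) simp
  also have "\<dots> = (if r \<le> q then c (q - r) else 0)"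
    using r by simp
  finally show "fps_nth (\<Sum>l<m. fps_X ^ (l * Suc m) * dilate m c) n =
      fps_nth (Abs_fps (\<lambda>n. if n mod m \<le> n div m then c (n div m - n mod m) else 0)) n"
    by (simp add: q_def r_def)
qed

text \<open>The generating function for \<open>k = m + 1\<close>: it equals \<open>P \<cdot> D\<close> with the geometric sum
  \<open>P = \<Sum>l<m. x^(l k)\<close> and \<open>D = \<Sum>a. C(a + m, m) x^(a m)\<close>, and both factors have known inverses.\<close>

lemma communal_generating_function:
  assumes "m > 0"
  shows "Abs_fps (\<lambda>g. real (communal_count (Suc m) (\<lambda>_. 1 / real m) (int g))) =
           (1 - fps_X ^ (Suc m * m)) / ((1 - fps_X ^ Suc m) * (1 - fps_X ^ m) ^ Suc m)"
proof -
  define F where "F = Abs_fps (\<lambda>g. real (communal_count (Suc m) (\<lambda>_. 1 / real m) (int g)))"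
  define D :: "real fps" where "D = dilate m (\<lambda>a. of_nat ((a + m) choose m))"
  define P :: "real fps" where "P = (\<Sum>l<m. (fps_X ^ Suc m) ^ l)"
  define B :: "real fps" where "B = (1 - fps_X ^ Suc m) * (1 - fps_X ^ m) ^ Suc m"
  have "(fps_X ^ Suc m) ^ l = (fps_X ^ (l * Suc m) :: real fps)" for l
    by (metis power_mult mult.commute)
  then have "P * D = (\<Sum>l<m. fps_X ^ (l * Suc m) * D)"
    unfolding P_def sum_distrib_right by simp
  also have "\<dots> = F"
    unfolding D_def F_def shifted_dilates_sum[OF assms] communal_count_uniform[OF assms]
    by (intro arg_cong[where f = Abs_fps] ext) simp
  finally have F_eq: "F = P * D" ..
  have geometric: "P * (1 - fps_X ^ Suc m) = 1 - fps_X ^ (Suc m * m)"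
    unfolding P_def one_diff_power_eq[of "fps_X ^ Suc m" m] power_mult by (simp add: mult.commute)
  have "F * B = (P * (1 - fps_X ^ Suc m)) * (D * (1 - fps_X ^ m) ^ Suc m)"
    by (simp add: F_eq B_def mult_ac)
  also have "\<dots> = 1 - fps_X ^ (Suc m * m)"
    unfolding geometric D_def dilate_binomial_inverse[OF assms] by simp
  finally have "F * B = 1 - fps_X ^ (Suc m * m)" .
  moreover have "fps_nth B 0 = 1"
    using assms by (simp add: B_def fps_power_zeroth zero_power)
  then have "B \<noteq> 0" by auto
  ultimately show ?thesis
    unfolding F_def[symmetric] B_def[symmetric] by (metis nonzero_mult_div_cancel_right)
qed

theorem mainTheorem10:
  fixes k :: nat and \<alpha> :: "nat \<Rightarrow> real"
  assumes "k \<ge> 2"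
    and "\<alpha> = (\<lambda>i. 1 / real (k - 1))"
  shows "(\<forall>g::nat. communal_count k \<alpha> (int g) =
            nat ((int g - int (g mod (k - 1)) * int k) div int (k - 1) + int k - 1) choose (k - 1))
       \<and> Abs_fps (\<lambda>g. real (communal_count k \<alpha> (int g)))
           = (1 - fps_X ^ (k * (k - 1))) / ((1 - fps_X ^ k) * (1 - fps_X ^ (k - 1)) ^ k)"
proof
  show "\<forall>g::nat. communal_count k \<alpha> (int g) =
          nat ((int g - int (g mod (k - 1)) * int k) div int (k - 1) + int k - 1) choose (k - 1)"
    using communal_count_closed_form[OF assms(1)] assms(2) by simp
  define m where "m = k - 1"
  have m: "m > 0" "k = Suc m"
    using assms(1) by (auto simp: m_def)
  show "Abs_fps (\<lambda>g. real (communal_count k \<alpha> (int g)))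
          = (1 - fps_X ^ (k * (k - 1))) / ((1 - fps_X ^ k) * (1 - fps_X ^ (k - 1)) ^ k)"
    unfolding assms(2) m_def[symmetric] using communal_generating_function[OF m(1)] m(2) by simp
qed

end
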